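(* Consider a hyperfractal with $n$ nodes and $d_F>2$. Let $\epsilon>0$ and $H(n)=\left\lceil \frac{\log(n^{1-\epsilon}p/2)}{\log(2/q)}\right\rceil$, and let $n_c$ denote the number of mobile nodes on a street of level $H(n)$. Then the probability that this street is empty, i.e. $\mathbb{P}(n_c=0)$, is smaller than $e^{-(q/2)n^{\epsilon}}$.
   Context: Hyperfractal model: the map is the unit square $[0,1]^2$. For $l\ge 0$ let $\mathcal{X}_l=\{(b2^{-(l+1)},y): b=1,3,\dots,2^{l+1}-1,\ y\in[0,1]\}\cup\{(x,b2^{-(l+1)}): b=1,3,\dots,2^{l+1}-1,\ x\in[0,1]\}$; each such segment is a street of level $l$. Fix $p\in(0,1)$, $q=1-p$. The $n$ mobile nodes form a Poisson point process on $\bigcup_l\mathcal{X}_l$ with total mean $n$ and one-dimensional intensity $\lambda_l=n(p/2)(q/2)^l$ on $\mathcal{X}_l$. The fractal dimension is $d_F=\log(4/q)/\log 2$. *)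

theory Defs
  imports "HOL-Probability.Probability"
begin

definition hf_q :: "real \<Rightarrow> real" where
  "hf_q p = 1 - p"

definition hf_dim :: "real \<Rightarrow> real" where
  "hf_dim p = ln (4 / hf_q p) / ln 2"

text \<open>One-dimensional intensity of the Poisson point process on a street of level l.\<close>
definition hf_intensity :: "nat \<Rightarrow> real \<Rightarrow> nat \<Rightarrow> real" where
  "hf_intensity n p l = real n * (p / 2) * (hf_q p / 2) ^ l"

definition street_length :: real where
  "street_length = 1"

definition hf_H :: "nat \<Rightarrow> real \<Rightarrow> real \<Rightarrow> int" where
  "hf_H n p \<epsilon> = \<lceil>ln (real n powr (1 - \<epsilon>) * p / 2) / ln (2 / hf_q p)\<rceil>"

end

theory Submission
  imports Defs
begin

text \<open>The street count is Poisson with mean \<open>\<lambda> = (n p/2) r powr -H\<close>, where \<open>r = 2/q\<close>, so the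
  street is empty with probability \<open>exp (-\<lambda>)\<close>. As \<open>H\<close> is the ceiling of \<open>log r A\<close> with
  \<open>A = n powr (1 - \<epsilon>) p/2\<close>, we get \<open>r powr -H > 1/(A r)\<close>, hence \<open>\<lambda> > (n p/2)/(A r) = (q/2) n powr \<epsilon>\<close>.\<close>

lemma measure_eq_zero_poisson:
  assumes "nc \<in> measurable M (count_space UNIV)"
    and "distr M (count_space UNIV) nc = measure_pmf (poisson_pmf L)"
    and "0 < L"
  shows "measure M {\<omega> \<in> space M. nc \<omega> = (0::nat)} = exp (- L)"
proof -
  have "measure M {\<omega> \<in> space M. nc \<omega> = 0} = measure (distr M (count_space UNIV) nc) {0}"
    using assms(1) by (subst measure_distr) (auto intro: arg_cong[where f = "measure M"])
  also have "\<dots> = pmf (poisson_pmf L) 0"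
    by (simp add: assms(2) measure_pmf_single)
  finally show ?thesis
    using assms(3) by simp
qed

lemma powr_minus_ceiling_log_gt:
  fixes r A :: real
  assumes "1 < r" "0 < A"
  shows "r powr (- real_of_int \<lceil>log r A\<rceil>) > 1 / (A * r)"
proof -
  have "r powr (- real_of_int \<lceil>log r A\<rceil>) > r powr (- (log r A + 1))"
    using assms(1) by (intro powr_less_mono) linarith+
  also have "r powr (- (log r A + 1)) = inverse (r powr (log r A + 1))"
    by (rule powr_minus)
  also have "r powr (log r A + 1) = A * r"
    using assms by (simp add: powr_add)
  finally show ?thesis
    by (simp add: divide_inverse)
qed

lemma hf_intensity_level_H_gt:
  assumes "0 < p" "p < 1" "n > 0" "hf_H n p \<epsilon> \<ge> 0"
  shows "hf_intensity n p (nat (hf_H n p \<epsilon>)) > (hf_q p / 2) * real n powr \<epsilon>"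
proof -
  define q where "q = hf_q p"
  define r where "r = 2 / q"
  define A where "A = real n powr (1 - \<epsilon>) * p / 2"
  define H where "H = hf_H n p \<epsilon>"
  have q: "0 < q" "q < 1"
    using assms(1,2) by (auto simp: q_def hf_q_def)
  have r: "1 < r"
    using q by (simp add: r_def)
  have A: "0 < A"
    using assms(1,3) by (simp add: A_def)
  have H: "H = \<lceil>log r A\<rceil>"
    by (simp add: H_def hf_H_def log_def A_def r_def q_def)
  have "(q / 2) ^ nat H = inverse (r ^ nat H)"
    by (simp add: r_def power_inverse[symmetric])
  also have "\<dots> = r powr (- real_of_int H)"
    using r assms(4) by (simp add: H_def powr_minus powr_realpow[symmetric])
  finally have "(q / 2) ^ nat H = r powr (- real_of_int H)" .
  then have intensity: "hf_intensity n p (nat H) = real n * (p / 2) * r powr (- real_of_int H)"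
    by (simp add: hf_intensity_def q_def)
  have "real n * (p / 2) * (1 / (A * r)) < real n * (p / 2) * r powr (- real_of_int H)"
    using powr_minus_ceiling_log_gt[OF r A] assms(1,3) unfolding H
    by (intro mult_strict_left_mono) simp_all
  moreover have "real n * (p / 2) * (1 / (A * r)) = (q / 2) * real n powr \<epsilon>"
    using assms(1,3) q
    by (simp add: A_def r_def powr_diff field_simps)
  ultimately have "(q / 2) * real n powr \<epsilon> < hf_intensity n p (nat H)"
    unfolding intensity by linarith
  then show ?thesis
    by (simp add: H_def q_def)
qed

theorem lemma5:
  fixes M :: "'a measure" and nc :: "'a \<Rightarrow> nat"
    and n :: nat and p \<epsilon> :: real
  assumes "prob_space M"
    and "0 < p" "p < 1"
    and "n > 0"
    and "hf_dim p > 2"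
    and "\<epsilon> > 0"
    and "hf_H n p \<epsilon> \<ge> 0"
    and "nc \<in> measurable M (count_space UNIV)"
    and "distr M (count_space UNIV) nc =
           measure_pmf (poisson_pmf (hf_intensity n p (nat (hf_H n p \<epsilon>)) * street_length))"
  shows "measure M {\<omega> \<in> space M. nc \<omega> = 0} < exp (- (hf_q p / 2) * real n powr \<epsilon>)"
proof -
  define rate where "rate = hf_intensity n p (nat (hf_H n p \<epsilon>))"
  have gt: "rate > (hf_q p / 2) * real n powr \<epsilon>"
    unfolding rate_def using assms(2-4,7) by (rule hf_intensity_level_H_gt)
  moreover have "0 < (hf_q p / 2) * real n powr \<epsilon>"
    using assms(3,4) by (simp add: hf_q_def)
  ultimately have "measure M {\<omega> \<in> space M. nc \<omega> = 0} = exp (- rate)"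
    using measure_eq_zero_poisson[OF assms(8,9)] by (simp add: rate_def street_length_def)
  with gt show ?thesis
    by simp
qed

end
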